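(* Let $k\ge 1$ and let $D_k\in\{0,1\}^{k\times k}$ be the matrix with $\mathrm{supp}(D_k)=\{(i,i):i\in[k]\}$. A matrix $M\in\{0,1\}^{m\times n}$ avoids $D_k$ as an interval minor if and only if $M$ contains $k-1$ increasing walks $W_1,\dots,W_{k-1}$ from $(m,1)$ to $(1,n)$ such that $\mathrm{supp}(M)\subseteq W_1\cup\dots\cup W_{k-1}$.
   Context: Rows are numbered top to bottom, columns left to right; $(i,j)$ is the entry in row $i$, column $j$; $\mathrm{supp}(M)$ is the set of 1-entries; $[k]=\{1,\dots,k\}$, $(a,b]=\{a+1,\dots,b\}$. A pattern $P\in\{0,1\}^{k\times\ell}$ is an interval minor of $M\in\{0,1\}^{m\times n}$ if there are integers $0=r_0<\dots<r_k=m$ and $0=c_0<\dots<c_\ell=n$ such that for each 1-entry $(i,j)$ of $P$ the submatrix of $M$ on rows $(r_{i-1},r_i]$ and columns $(c_{j-1},c_j]$ contains a 1-entry; otherwise $M$ avoids $P$. An increasing walk from $e$ to $e'$ in $M$ is a set of entries $\{e_0,\dots,e_t\}$, $e_i=(r_i,c_i)$, with $e_0=e$, $e_t=e'$, and for each $i\in[t]$ either $r_i=r_{i-1}$ and $c_i=c_{i-1}+1$, or $r_i=r_{i-1}-1$ and $c_i=c_{i-1}$. *)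

theory Defs
  imports Main
begin

text \<open>A 0/1 matrix with m rows and n columns is modelled as a predicate
  M :: nat \<Rightarrow> nat \<Rightarrow> bool, where M i j means entry (i,j) is 1;
  only entries with 1 \<le> i \<le> m and 1 \<le> j \<le> n are meaningful.\<close>

definition supp :: "nat \<Rightarrow> nat \<Rightarrow> (nat \<Rightarrow> nat \<Rightarrow> bool) \<Rightarrow> (nat \<times> nat) set" where
  "supp m n M = {(i, j). i \<in> {1..m} \<and> j \<in> {1..n} \<and> M i j}"

definition interval_minor ::
  "nat \<Rightarrow> nat \<Rightarrow> (nat \<Rightarrow> nat \<Rightarrow> bool) \<Rightarrow> nat \<Rightarrow> nat \<Rightarrow> (nat \<Rightarrow> nat \<Rightarrow> bool) \<Rightarrow> bool" where
  "interval_minor k l P m n M \<longleftrightarrow>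
     (\<exists>r c :: nat \<Rightarrow> nat.
        r 0 = 0 \<and> r k = m \<and> (\<forall>i<k. r i < r (Suc i)) \<and>
        c 0 = 0 \<and> c l = n \<and> (\<forall>j<l. c j < c (Suc j)) \<and>
        (\<forall>(i, j) \<in> supp k l P.
           \<exists>a b. a \<in> {r (i - 1) <.. r i} \<and> b \<in> {c (j - 1) <.. c j} \<and> M a b))"

definition diag_pattern :: "nat \<Rightarrow> nat \<Rightarrow> bool" where
  "diag_pattern i j \<longleftrightarrow> i = j"

definition increasing_walk ::
  "nat \<Rightarrow> nat \<Rightarrow> nat \<times> nat \<Rightarrow> nat \<times> nat \<Rightarrow> (nat \<times> nat) set \<Rightarrow> bool" where
  "increasing_walk m n e e' W \<longleftrightarrow>
     (\<exists>(t::nat) (f :: nat \<Rightarrow> nat \<times> nat).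
        W = f ` {0..t} \<and> f 0 = e \<and> f t = e' \<and>
        (\<forall>s\<in>{0..t}. fst (f s) \<in> {1..m} \<and> snd (f s) \<in> {1..n}) \<and>
        (\<forall>s\<in>{1..t}.
           (fst (f s) = fst (f (s - 1)) \<and> snd (f s) = snd (f (s - 1)) + 1) \<or>
           (fst (f s) + 1 = fst (f (s - 1)) \<and> snd (f s) = snd (f (s - 1)))))"

end

theory Submission
  imports Defs
begin

text \<open>Order the entries by \<open>(i, j) < (i', j')\<close> iff \<open>i < i'\<close> and \<open>j < j'\<close>. An occurrence of
  \<open>D\<^sub>k\<close> as an interval minor amounts to a chain of \<open>k\<close> one-entries, since the interval cuts
  can be placed between consecutive chain elements. The entries of an increasing walk are pairwise
  incomparable, and conversely every antichain of the \<open>m \<times> n\<close> grid lies on a walk from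
  \<open>(m, 1)\<close> to \<open>(1, n)\<close>, built greedily. So the theorem is an instance of Mirsky's theorem
  (the dual of Dilworth's): a chain of length \<open>k\<close> meets \<open>k\<close> different walks, and if there is none, the level
  sets of the height function (the length of the longest chain ending in an entry) are
  \<open>k - 1\<close> antichains covering the support.\<close>

definition diag_less :: "nat \<times> nat \<Rightarrow> nat \<times> nat \<Rightarrow> bool" where
  "diag_less x y \<longleftrightarrow> fst x < fst y \<and> snd x < snd y"

definition has_diag_chain :: "nat \<Rightarrow> (nat \<times> nat) set \<Rightarrow> bool" where
  "has_diag_chain k S \<longleftrightarrow> (\<exists>xs. sorted_wrt diag_less xs \<and> length xs = k \<and> set xs \<subseteq> S)"

text \<open>An abbreviation, so that it matches the step condition inside \<open>increasing_walk_def\<close>.\<close>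

abbreviation walk_step :: "nat \<times> nat \<Rightarrow> nat \<times> nat \<Rightarrow> bool" where
  "walk_step p q \<equiv> (fst q = fst p \<and> snd q = snd p + 1) \<or> (fst q + 1 = fst p \<and> snd q = snd p)"

lemma increasing_walk_singleton:
  "fst e \<in> {1..m} \<Longrightarrow> snd e \<in> {1..n} \<Longrightarrow> increasing_walk m n e e {e}"
  unfolding increasing_walk_def by (intro exI[of _ 0] exI[of _ "\<lambda>_. e"]) auto

lemma increasing_walk_insert:
  assumes "increasing_walk m n q e' W" "fst p \<in> {1..m}" "snd p \<in> {1..n}" "walk_step p q"
  shows "increasing_walk m n p e' (insert p W)"
proof -
  obtain t :: nat and f where W: "W = f ` {0..t}" and f: "f 0 = q" "f t = e'"
    and inside: "\<forall>s\<in>{0..t}. fst (f s) \<in> {1..m} \<and> snd (f s) \<in> {1..n}"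
    and steps: "\<forall>s\<in>{1..t}. walk_step (f (s - 1)) (f s)"
    using assms(1) unfolding increasing_walk_def by blast
  define g where "g s = (case s of 0 \<Rightarrow> p | Suc s' \<Rightarrow> f s')" for s
  have "insert p W = g ` {0..Suc t}"
    using W by (simp add: g_def atLeast0AtMost atMost_Suc_eq_insert_0 image_image)
  moreover have "\<forall>s\<in>{0..Suc t}. fst (g s) \<in> {1..m} \<and> snd (g s) \<in> {1..n}"
    using inside assms(2,3) by (auto simp: g_def split: nat.split)
  moreover have "\<forall>s\<in>{1..Suc t}. walk_step (g (s - 1)) (g s)"
  proof
    fix s assume "s \<in> {1..Suc t}"
    show "walk_step (g (s - 1)) (g s)"
    proof (cases "s = 1")
      case True
      then show ?thesis using assms(4) f(1) by (simp add: g_def)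
    next
      case False
      with \<open>s \<in> {1..Suc t}\<close> obtain s' where s': "s = Suc (Suc s')" "Suc s' \<in> {1..t}"
        using le_Suc_ex[of 2 s] by force
      show ?thesis using steps[rule_format, OF s'(2)] by (simp add: s'(1) g_def)
    qed
  qed
  ultimately show ?thesis
    unfolding increasing_walk_def using f(2) by (intro exI[of _ "Suc t"] exI[of _ g]) (simp add: g_def)
qed

lemma increasing_walk_not_diag_less:
  assumes "increasing_walk m n e e' W" "x \<in> W" "y \<in> W"
  shows "\<not> diag_less x y"
proof -
  obtain t :: nat and f where W: "W = f ` {0..t}" and steps: "\<forall>s\<in>{1..t}. walk_step (f (s - 1)) (f s)"
    using assms(1) unfolding increasing_walk_def by blast
  have mono: "fst (f s') \<le> fst (f s) \<and> snd (f s) \<le> snd (f s')" if "s \<le> s'" "s' \<le> t" for s s'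
    using that
  proof (induction s' rule: dec_induct)
    case (step s')
    then have "walk_step (f s') (f (Suc s'))" using steps[rule_format, of "Suc s'"] by simp
    with step show ?case by auto
  qed simp
  obtain i j where "x = f i" "y = f j" "i \<le> t" "j \<le> t" using W assms(2,3) by auto
  then show ?thesis
    using mono[of i j] mono[of j i] by (cases "i \<le> j") (auto simp: diag_less_def)
qed

lemma diag_antichain_subset_increasing_walk:
  assumes "C \<subseteq> {1..a} \<times> {b..n}" "\<forall>x\<in>C. \<forall>y\<in>C. \<not> diag_less x y"
    and "1 \<le> a" "a \<le> m" "1 \<le> b" "b \<le> n"
  shows "\<exists>W. increasing_walk m n (a, b) (1, n) W \<and> C \<subseteq> W"
  using assms
proof (induction "a + (n - b)" arbitrary: a b C rule: less_induct)
  \<comment> \<open>Step up unless some other element of \<open>C\<close> lies in row \<open>a\<close>; such an element then forces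
    all of \<open>C\<close> except \<open>(a, b)\<close> to the right of column \<open>b\<close>.\<close>
  case less
  let ?C = "C - {(a, b)}"
  show ?case
  proof (cases "a = 1 \<and> b = n")
    case True
    then have "C \<subseteq> {(1, n)}" using less.prems(1) by auto
    with True show ?thesis using increasing_walk_singleton[of "(1, n)" m n] less.prems by auto
  next
    case corner: False
    consider (up) "1 < a" "?C \<subseteq> {1..a - 1} \<times> {b..n}" | (right) "b < n" "?C \<subseteq> {1..a} \<times> {Suc b..n}"
    proof (cases "\<exists>q\<in>?C. fst q = a")
      case True
      then obtain q where q: "q \<in> ?C" "fst q = a" by blast
      with less.prems(1) have "b < snd q" "snd q \<le> n" by (cases q; auto)+
      moreover have "?C \<subseteq> {1..a} \<times> {Suc b..n}"
      proof
        fix x assume x: "x \<in> ?C"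
        have "\<not> diag_less x q" using x q less.prems(2) by blast
        with x q \<open>b < snd q\<close> less.prems(1) show "x \<in> {1..a} \<times> {Suc b..n}"
          by (cases x) (force simp: diag_less_def)
      qed
      ultimately show thesis using right by simp
    next
      case False
      then have "?C \<subseteq> {1..a - 1} \<times> {b..n}" using less.prems(1) by force
      then show thesis using up right corner less.prems(3,6) by fastforce
    qed
    then show ?thesis
    proof cases
      case up
      have "\<exists>W. increasing_walk m n (a - 1, b) (1, n) W \<and> ?C \<subseteq> W"
        by (rule less.hyps) (use up less.prems in auto)
      then obtain W where "increasing_walk m n (a - 1, b) (1, n) W" "?C \<subseteq> W" by blast
      moreover have "increasing_walk m n (a, b) (1, n) (insert (a, b) W)"
        using calculation(1) up less.prems by (intro increasing_walk_insert) auto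
      ultimately show ?thesis by blast
    next
      case right
      have "\<exists>W. increasing_walk m n (a, Suc b) (1, n) W \<and> ?C \<subseteq> W"
        by (rule less.hyps) (use right less.prems in auto)
      then obtain W where "increasing_walk m n (a, Suc b) (1, n) W" "?C \<subseteq> W" by blast
      moreover have "increasing_walk m n (a, b) (1, n) (insert (a, b) W)"
        using calculation(1) right less.prems by (intro increasing_walk_insert) auto
      ultimately show ?thesis by blast
    qed
  qed
qed

text \<open>Boundaries placing the \<open>i\<close>-th element of \<open>ps\<close> (counted from 0) in the interval
  \<open>(cuts ps m i, cuts ps m (i + 1)]\<close>.\<close>

definition cuts :: "nat list \<Rightarrow> nat \<Rightarrow> nat \<Rightarrow> nat" where
  "cuts ps m i = (if i = 0 then 0 else if i < length ps then ps ! (i - 1) else m)"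

lemma cuts_bracket:
  assumes "sorted_wrt (<) ps" "\<forall>p\<in>set ps. 1 \<le> p \<and> p \<le> m" "i < length ps"
  shows "cuts ps m i < ps ! i \<and> ps ! i \<le> cuts ps m (Suc i)"
proof -
  have "ps ! (i - 1) < ps ! i" if "i \<noteq> 0"
    using sorted_wrt_nth_less[OF assms(1)] that assms(3) by simp
  moreover have "1 \<le> ps ! i \<and> ps ! i \<le> m" using assms(2,3) by simp
  ultimately show ?thesis using assms(3) unfolding cuts_def by auto
qed

lemma chain_imp_interval_minor_diag:
  assumes "sorted_wrt diag_less xs" "length xs = k" "1 \<le> k" "set xs \<subseteq> supp m n M"
  shows "interval_minor k k diag_pattern m n M"
proof -
  define r where "r = cuts (map fst xs) m"
  define c where "c = cuts (map snd xs) n"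
  have "sorted_wrt (<) (map fst xs)" "sorted_wrt (<) (map snd xs)"
    using assms(1) by (auto simp: sorted_wrt_map diag_less_def elim: sorted_wrt_mono_rel[rotated])
  moreover have "\<forall>p\<in>set (map fst xs). 1 \<le> p \<and> p \<le> m" "\<forall>p\<in>set (map snd xs). 1 \<le> p \<and> p \<le> n"
    using assms(4) by (auto simp: supp_def)
  ultimately have bracket: "r i < fst (xs ! i) \<and> fst (xs ! i) \<le> r (Suc i) \<and>
      c i < snd (xs ! i) \<and> snd (xs ! i) \<le> c (Suc i)" if "i < k" for i
    using cuts_bracket that assms(2) unfolding r_def c_def by (metis length_map nth_map)
  have "xs ! i \<in> supp m n M" if "i < k" for i
    using assms(2,4) that by auto
  then have one: "M (fst (xs ! i)) (snd (xs ! i))" if "i < k" for i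
    using that by (force simp: supp_def)
  have "\<exists>a b. a \<in> {r (i - 1)<..r i} \<and> b \<in> {c (i - 1)<..c i} \<and> M a b" if "i \<in> {1..k}" for i
    using bracket[of "i - 1"] one[of "i - 1"] that
    by (intro exI[of _ "fst (xs ! (i - 1))"] exI[of _ "snd (xs ! (i - 1))"]) auto
  moreover have "r 0 = 0" "r k = m" "c 0 = 0" "c k = n"
    using assms(2,3) by (auto simp: r_def c_def cuts_def)
  moreover have "\<forall>i<k. r i < r (Suc i) \<and> c i < c (Suc i)"
    using bracket by fastforce
  ultimately show ?thesis
    unfolding interval_minor_def by (intro exI[of _ r] exI[of _ c]) (auto simp: supp_def diag_pattern_def)
qed

lemma interval_minor_diag_imp_chain:
  assumes "interval_minor k k diag_pattern m n M"
  shows "\<exists>xs. sorted_wrt diag_less xs \<and> length xs = k \<and> set xs \<subseteq> supp m n M"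
proof -
  obtain r c where r: "r 0 = 0" "r k = m" "\<forall>i<k. r i < r (Suc i)"
    and c: "c 0 = 0" "c k = n" "\<forall>j<k. c j < c (Suc j)"
    and blocks: "\<forall>(i, j) \<in> supp k k diag_pattern.
      \<exists>a b. a \<in> {r (i - 1)<..r i} \<and> b \<in> {c (j - 1)<..c j} \<and> M a b"
    using assms unfolding interval_minor_def by blast
  have "(Suc i, Suc i) \<in> supp k k diag_pattern" if "i < k" for i
    using that by (simp add: supp_def diag_pattern_def)
  then have "\<exists>a b. a \<in> {r i<..r (Suc i)} \<and> b \<in> {c i<..c (Suc i)} \<and> M a b" if "i < k" for i
    using blocks that by fastforce
  then obtain a b where ab: "\<And>i. i < k \<Longrightarrow> a i \<in> {r i<..r (Suc i)} \<and> b i \<in> {c i<..c (Suc i)} \<and> M (a i) (b i)"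
    by metis
  have r_mono: "r i \<le> r j" if "i \<le> j" "j \<le> k" for i j
    by (rule lift_Suc_mono_le_ivl[of "{..<k}"]) (use r(3) that in auto)
  have c_mono: "c i \<le> c j" if "i \<le> j" "j \<le> k" for i j
    by (rule lift_Suc_mono_le_ivl[of "{..<k}"]) (use c(3) that in auto)
  define xs where "xs = map (\<lambda>i. (a i, b i)) [0..<k]"
  have "diag_less (a i, b i) (a j, b j)" if "i < j" "j < k" for i j
    using ab[of i] ab[of j] r_mono[of "Suc i" j] c_mono[of "Suc i" j] that by (auto simp: diag_less_def)
  then have "sorted_wrt diag_less xs"
    unfolding xs_def sorted_wrt_iff_nth_less by simp
  moreover have "(a i, b i) \<in> supp m n M" if "i < k" for i
    using ab[of i] r_mono[of "Suc i" k] c_mono[of "Suc i" k] r(2) c(2) that by (auto simp: supp_def)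
  then have "set xs \<subseteq> supp m n M" unfolding xs_def by auto
  moreover have "length xs = k" unfolding xs_def by simp
  ultimately show ?thesis by blast
qed

lemma interval_minor_diag_iff_has_diag_chain:
  "1 \<le> k \<Longrightarrow> interval_minor k k diag_pattern m n M \<longleftrightarrow> has_diag_chain k (supp m n M)"
  unfolding has_diag_chain_def using interval_minor_diag_imp_chain chain_imp_interval_minor_diag by blast

lemma sorted_wrt_related_if_distinct:
  "sorted_wrt R xs \<Longrightarrow> x \<in> set xs \<Longrightarrow> y \<in> set xs \<Longrightarrow> x \<noteq> y \<Longrightarrow> R x y \<or> R y x"
  by (induction xs) auto

lemma diag_less_trans: "diag_less x y \<Longrightarrow> diag_less y z \<Longrightarrow> diag_less x z"
  by (auto simp: diag_less_def)

lemma sorted_wrt_diag_less_distinct: "sorted_wrt diag_less xs \<Longrightarrow> distinct xs"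
  by (induction xs) (auto simp: diag_less_def)

lemma diag_chain_length_le_walk_cover:
  assumes "\<forall>i\<in>I. increasing_walk m n e e' (W i)" "finite I"
    and "sorted_wrt diag_less xs" "set xs \<subseteq> (\<Union>i\<in>I. W i)"
  shows "length xs \<le> card I"
proof -
  obtain w where w: "\<And>x. x \<in> set xs \<Longrightarrow> w x \<in> I \<and> x \<in> W (w x)"
    using assms(4) by (metis UN_iff subsetD)
  have "inj_on w (set xs)"
  proof (rule inj_onI, rule ccontr)
    fix x y assume xy: "x \<in> set xs" "y \<in> set xs" "w x = w y" "x \<noteq> y"
    then have "diag_less x y \<or> diag_less y x"
      using sorted_wrt_related_if_distinct[OF assms(3)] by blast
    moreover have "increasing_walk m n e e' (W (w x))" "x \<in> W (w x)" "y \<in> W (w x)"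
      using assms(1) w xy by metis+
    ultimately show False using increasing_walk_not_diag_less by blast
  qed
  then have "card (set xs) \<le> card I"
    using w assms(2) by (intro card_inj_on_le) auto
  then show ?thesis
    using distinct_card[OF sorted_wrt_diag_less_distinct[OF assms(3)]] by simp
qed

definition chain_height :: "(nat \<times> nat) set \<Rightarrow> nat \<times> nat \<Rightarrow> nat" where
  "chain_height S e = Max {length ys + 1 | ys. sorted_wrt diag_less (ys @ [e]) \<and> set ys \<subseteq> S}"

lemma finite_chain_heights:
  assumes "finite S"
  shows "finite {length ys + 1 | ys. sorted_wrt diag_less (ys @ [e]) \<and> set ys \<subseteq> S}"
proof -
  have "length ys + 1 \<le> card (insert e S)" if "sorted_wrt diag_less (ys @ [e])" "set ys \<subseteq> S" for ys
  proof -
    have "length ys + 1 = card (set (ys @ [e]))"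
      using distinct_card[OF sorted_wrt_diag_less_distinct[OF that(1)]] by simp
    also have "\<dots> \<le> card (insert e S)" using that(2) assms by (intro card_mono) auto
    finally show ?thesis .
  qed
  then have "{length ys + 1 | ys. sorted_wrt diag_less (ys @ [e]) \<and> set ys \<subseteq> S} \<subseteq> {..card (insert e S)}"
    by auto
  then show ?thesis by (rule finite_subset) simp
qed

lemma chain_height_ge:
  "finite S \<Longrightarrow> sorted_wrt diag_less (ys @ [e]) \<Longrightarrow> set ys \<subseteq> S \<Longrightarrow> length ys + 1 \<le> chain_height S e"
  unfolding chain_height_def by (rule Max_ge[OF finite_chain_heights]) blast+

lemma chain_height_pos: "finite S \<Longrightarrow> 1 \<le> chain_height S e"
  using chain_height_ge[of S "[]" e] by simp

lemma chain_height_attained: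
  assumes "finite S"
  obtains ys where "chain_height S e = length ys + 1" "sorted_wrt diag_less (ys @ [e])" "set ys \<subseteq> S"
proof -
  have "chain_height S e \<in> {length ys + 1 | ys. sorted_wrt diag_less (ys @ [e]) \<and> set ys \<subseteq> S}"
    unfolding chain_height_def
    by (rule Max_in[OF finite_chain_heights[OF assms]]) (auto intro!: exI[of _ "[]"])
  then show ?thesis using that by blast
qed

lemma chain_height_less:
  assumes "finite S" "x \<in> S" "diag_less x y"
  shows "chain_height S x < chain_height S y"
proof -
  obtain ys where ys: "chain_height S x = length ys + 1" "sorted_wrt diag_less (ys @ [x])" "set ys \<subseteq> S"
    using chain_height_attained[OF assms(1)] .
  have "sorted_wrt diag_less ((ys @ [x]) @ [y])"
    using ys(2) assms(3) by (simp add: sorted_wrt_append) (meson diag_less_trans)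
  then have "length (ys @ [x]) + 1 \<le> chain_height S y"
    using chain_height_ge[OF assms(1), of "ys @ [x]"] ys(3) assms(2) by simp
  with ys(1) show ?thesis by simp
qed

lemma chain_height_less_if_no_chain:
  assumes "finite S" "\<not> has_diag_chain k S" "e \<in> S"
  shows "chain_height S e < k"
proof (rule ccontr)
  assume "\<not> chain_height S e < k"
  obtain ys where ys: "chain_height S e = length ys + 1" "sorted_wrt diag_less (ys @ [e])" "set ys \<subseteq> S"
    using chain_height_attained[OF assms(1)] .
  have "sorted_wrt diag_less (take k (ys @ [e]))" using sorted_wrt_take[OF ys(2)] .
  moreover have "length (take k (ys @ [e])) = k" using ys(1) \<open>\<not> chain_height S e < k\<close> by simp
  moreover have "set (take k (ys @ [e])) \<subseteq> S" using ys(3) assms(3) set_take_subset by fastforce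
  ultimately show False using assms(2) unfolding has_diag_chain_def by blast
qed

lemma walk_cover_if_no_diag_chain:
  assumes "S \<subseteq> {1..m} \<times> {1..n}" "1 \<le> m" "1 \<le> n"
    and "\<not> has_diag_chain k S"
  shows "\<exists>W. (\<forall>i\<in>{1..k-1}. increasing_walk m n (m, 1) (1, n) (W i)) \<and> S \<subseteq> (\<Union>i\<in>{1..k-1}. W i)"
proof -
  have fin: "finite S" using assms(1) finite_subset by blast
  have "\<exists>W. increasing_walk m n (m, 1) (1, n) W \<and> {e \<in> S. chain_height S e = i} \<subseteq> W" for i
  proof (rule diag_antichain_subset_increasing_walk)
    show "\<forall>x\<in>{e \<in> S. chain_height S e = i}. \<forall>y\<in>{e \<in> S. chain_height S e = i}. \<not> diag_less x y"
      using chain_height_less[OF fin] by fastforce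
  qed (use assms in auto)
  then obtain W where W: "\<forall>i. increasing_walk m n (m, 1) (1, n) (W i) \<and> {e \<in> S. chain_height S e = i} \<subseteq> W i"
    using choice[of "\<lambda>i W. increasing_walk m n (m, 1) (1, n) W \<and> {e \<in> S. chain_height S e = i} \<subseteq> W"] by blast
  have "S \<subseteq> (\<Union>i\<in>{1..k-1}. W i)"
  proof
    fix e assume "e \<in> S"
    then have "chain_height S e \<in> {1..k-1}" "e \<in> W (chain_height S e)"
      using chain_height_pos[OF fin, of e] chain_height_less_if_no_chain[OF fin assms(4), of e] W
      by auto
    then show "e \<in> (\<Union>i\<in>{1..k-1}. W i)" by blast
  qed
  with W show ?thesis by blast
qed

theorem proposition2p3:
  fixes k m n :: nat and M :: "nat \<Rightarrow> nat \<Rightarrow> bool"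
  assumes "k \<ge> 1" and "m \<ge> 1" and "n \<ge> 1"
  shows "(\<not> interval_minor k k diag_pattern m n M) \<longleftrightarrow>
         (\<exists>W :: nat \<Rightarrow> (nat \<times> nat) set.
            (\<forall>i\<in>{1..k-1}. increasing_walk m n (m, 1) (1, n) (W i)) \<and>
            supp m n M \<subseteq> (\<Union>i\<in>{1..k-1}. W i))"
proof -
  have "(\<not> interval_minor k k diag_pattern m n M) \<longleftrightarrow> \<not> has_diag_chain k (supp m n M)"
    using interval_minor_diag_iff_has_diag_chain[OF assms(1)] by simp
  also have "\<dots> \<longleftrightarrow> (\<exists>W. (\<forall>i\<in>{1..k-1}. increasing_walk m n (m, 1) (1, n) (W i)) \<and>
      supp m n M \<subseteq> (\<Union>i\<in>{1..k-1}. W i))"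
  proof
    assume no_chain: "\<not> has_diag_chain k (supp m n M)"
    have "supp m n M \<subseteq> {1..m} \<times> {1..n}" by (auto simp: supp_def)
    from walk_cover_if_no_diag_chain[OF this assms(2,3) no_chain]
    show "\<exists>W. (\<forall>i\<in>{1..k-1}. increasing_walk m n (m, 1) (1, n) (W i)) \<and>
        supp m n M \<subseteq> (\<Union>i\<in>{1..k-1}. W i)" .
  next
    assume "\<exists>W. (\<forall>i\<in>{1..k-1}. increasing_walk m n (m, 1) (1, n) (W i)) \<and>
      supp m n M \<subseteq> (\<Union>i\<in>{1..k-1}. W i)"
    then obtain W where W: "\<forall>i\<in>{1..k-1}. increasing_walk m n (m, 1) (1, n) (W i)"
      "supp m n M \<subseteq> (\<Union>i\<in>{1..k-1}. W i)" by blast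
    have "length xs < k" if "sorted_wrt diag_less xs" "set xs \<subseteq> supp m n M" for xs
    proof -
      have "length xs \<le> card {1..k-1}"
        using diag_chain_length_le_walk_cover[OF W(1) _ that(1)] W(2) that(2) by blast
      with assms(1) show ?thesis by simp
    qed
    then show "\<not> has_diag_chain k (supp m n M)"
      unfolding has_diag_chain_def by (meson less_irrefl)
  qed
  finally show ?thesis .
qed

end
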